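(* Let $\mathrm{Cl}_{p,q}$ be a non-degenerate real Clifford algebra with generators $e_1,\dots,e_n$, $n=p+q$, and let $\pi$ be the canonical matrix map defined below (extended linearly to $\mathrm{Cl}_{p,q}$). Let $e_s$ and $e_t$ be generators of $\mathrm{Cl}_{p,q}$. Then: (1) $\pi$ distributes over the Clifford product: $\pi(e_se_t)=\pi(e_s)\,\pi(e_t)$; (2) the set of all matrices $\mathbf{E}_S=\pi(e_S)$, $e_S\in\mathbf{B}$, forms a multiplicative semigroup.
   Context: Generators satisfy $e_ie_j=-e_je_i$ ($i\ne j$) and $e_i^2=\sigma_i\in\{1,-1\}$. For a multi-index $S=(s_1<\dots<s_m)\subseteq\{1,\dots,n\}$ let $e_S=e_{s_1}\cdots e_{s_m}$, $e_\emptyset=1$. The extended basis $\mathbf{B}$ is the list of all $2^n$ blades $e_S$ ordered by a fixed total order $\prec$ (extending $e_i\prec e_j$ for $i<j$, with $e_\emptyset=1$ first); each blade is indexed by its ordinal in this list. For blades $e_M,e_N$ one has $e_Me_N=m_{MN}\,e_{M\triangle N}$ with $m_{MN}\in\{1,-1\}$ ($\triangle$ = symmetric difference). The multiplication table is the $2^n\times 2^n$ array $\mathbf{M}=(e_Me_N)_{M,N}$. For a blade $e_S$, the coefficient map $C_S$ acts entrywise, sending an entry $x\,e_U$ to $x$ if $U=S$ and to $0$ otherwise; $\mathbf{A}_S:=C_S(\mathbf{M})$, i.e. $(\mathbf{A}_S)_{MN}=m_{MN}$ if $M\triangle N=S$ and $0$ otherwise. $\mathbf{G}$ is the diagonal $2^n\times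 2^n$ real matrix with diagonal entries $\sigma_M=e_M\ast e_M=\langle e_Me_M\rangle_0\in\{1,-1\}$. The canonical matrix map is $\pi(e_S)=\mathbf{E}_S:=\mathbf{G}\mathbf{A}_S$ (real $2^n\times 2^n$ matrix), extended linearly to all of $\mathrm{Cl}_{p,q}$. *)

theory Defs
  imports "Jordan_Normal_Form.Matrix"
begin

text \<open>The blade product e_M e_N = m_MN e_(M sym-diff N), where the sign m_MN is obtained by
  reordering generators (anticommutation) and contracting e_i e_i = sigma_i.\<close>

definition symdiff :: "nat set \<Rightarrow> nat set \<Rightarrow> nat set" where
  "symdiff M N = (M - N) \<union> (N - M)"

definition msign :: "(nat \<Rightarrow> real) \<Rightarrow> nat set \<Rightarrow> nat set \<Rightarrow> real" where
  "msign \<sigma> M N = (-1) ^ card {(i, j). i \<in> M \<and> j \<in> N \<and> j < i} * (\<Prod>i\<in>M \<inter> N. \<sigma> i)"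

text \<open>sigma_M = scalar part of e_M e_M\<close>
definition sigmaB :: "(nat \<Rightarrow> real) \<Rightarrow> nat set \<Rightarrow> real" where
  "sigmaB \<sigma> M = msign \<sigma> M M"

text \<open>Elements of Cl_{p,q}: coefficient functions on multi-indices (support in Pow {1..n}).\<close>
definition blade :: "nat set \<Rightarrow> (nat set \<Rightarrow> real)" where
  "blade S = (\<lambda>U. if U = S then 1 else 0)"

definition clprod :: "nat \<Rightarrow> (nat \<Rightarrow> real) \<Rightarrow> (nat set \<Rightarrow> real) \<Rightarrow> (nat set \<Rightarrow> real) \<Rightarrow> (nat set \<Rightarrow> real)" where
  "clprod n \<sigma> x y = (\<lambda>U. \<Sum>M\<in>Pow {1..n}. \<Sum>N\<in>Pow {1..n}.
      if symdiff M N = U then x M * y N * msign \<sigma> M N else 0)"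

text \<open>bl enumerates the extended basis B: bl k is the blade with ordinal k (0-based).\<close>
definition Gmat :: "nat \<Rightarrow> (nat \<Rightarrow> real) \<Rightarrow> (nat \<Rightarrow> nat set) \<Rightarrow> real mat" where
  "Gmat n \<sigma> bl = mat (2^n) (2^n) (\<lambda>(i, j). if i = j then sigmaB \<sigma> (bl i) else 0)"

definition Amat :: "nat \<Rightarrow> (nat \<Rightarrow> real) \<Rightarrow> (nat \<Rightarrow> nat set) \<Rightarrow> nat set \<Rightarrow> real mat" where
  "Amat n \<sigma> bl S = mat (2^n) (2^n)
     (\<lambda>(i, j). if symdiff (bl i) (bl j) = S then msign \<sigma> (bl i) (bl j) else 0)"

definition Emat :: "nat \<Rightarrow> (nat \<Rightarrow> real) \<Rightarrow> (nat \<Rightarrow> nat set) \<Rightarrow> nat set \<Rightarrow> real mat" where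
  "Emat n \<sigma> bl S = Gmat n \<sigma> bl * Amat n \<sigma> bl S"

definition cpi :: "nat \<Rightarrow> (nat \<Rightarrow> real) \<Rightarrow> (nat \<Rightarrow> nat set) \<Rightarrow> (nat set \<Rightarrow> real) \<Rightarrow> real mat" where
  "cpi n \<sigma> bl x = mat (2^n) (2^n)
     (\<lambda>(i, j). \<Sum>S\<in>Pow {1..n}. x S * Emat n \<sigma> bl S $$ (i, j))"

end

theory Submission
  imports Defs
begin

text \<open>The blade sign m(M,N) = (-1)^(number of inversions of M,N) * (product of \<sigma>_i over M \<inter> N)
  is a bicharacter of the group of multi-indices under symmetric difference: both factors are
  multiplicative in each argument because every \<sigma>_i squares to 1. Hence
  m(M \<triangle> N, N \<triangle> K) * m(M,K) = m(M,N) * \<sigma>_N * m(N,K), and this is exactly what the only nonzero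
  term N = M \<triangle> S of the entry (E_S E_T)(M,K) needs for E_S E_T = m(S,T) E_(S \<triangle> T).
  Since e_s e_t = m({s},{t}) e_({s} \<triangle> {t}) and m(S,T) = +-1, both claims follow.\<close>

lemma symdiff_assoc: "symdiff (symdiff A B) C = symdiff A (symdiff B C)"
  by (auto simp: symdiff_def)

lemma symdiff_cancel_left: "symdiff A (symdiff A B) = B"
  by (auto simp: symdiff_def)

lemma symdiff_eq_iff: "symdiff A B = C \<longleftrightarrow> B = symdiff A C"
  by (auto simp: symdiff_def)

lemma symdiff_subset: "A \<subseteq> I \<Longrightarrow> B \<subseteq> I \<Longrightarrow> symdiff A B \<subseteq> I"
  by (auto simp: symdiff_def)

lemma prod_symmetric_difference:
  fixes f :: "'a \<Rightarrow> 'b::comm_monoid_mult"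
  assumes "finite X" "finite Y" and square: "\<forall>x\<in>X \<inter> Y. f x * f x = 1"
  shows "prod f (sym_diff X Y) = prod f X * prod f Y"
proof -
  have "prod f (X \<inter> Y) * prod f (X \<inter> Y) = prod (\<lambda>x. f x * f x) (X \<inter> Y)"
    by (simp add: prod.distrib)
  also have "\<dots> = 1"
    using square by (intro prod.neutral) blast
  finally have common: "prod f (X \<inter> Y) * prod f (X \<inter> Y) = 1" .
  have "prod f X * prod f Y
      = (prod f (X \<inter> Y) * prod f (X \<inter> Y)) * (prod f (X - Y) * prod f (Y - X))"
    using prod.Int_Diff[OF assms(1), of f Y] prod.Int_Diff[OF assms(2), of f X]
    by (simp add: Int_commute mult_ac)
  also have "\<dots> = prod f (X - Y) * prod f (Y - X)"
    using common by simp
  also have "\<dots> = prod f (sym_diff X Y)"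
    using assms(1,2) by (intro prod.union_disjoint[symmetric]) auto
  finally show ?thesis ..
qed

definition inversions :: "nat set \<Rightarrow> nat set \<Rightarrow> (nat \<times> nat) set" where
  "inversions A B = {(i, j). i \<in> A \<and> j \<in> B \<and> j < i}"

lemma finite_inversions: "finite A \<Longrightarrow> finite B \<Longrightarrow> finite (inversions A B)"
  by (rule finite_subset[of _ "A \<times> B"]) (auto simp: inversions_def)

lemma inversions_symdiff_left:
  "inversions (symdiff A B) C = sym_diff (inversions A C) (inversions B C)"
  by (auto simp: inversions_def symdiff_def)

lemma inversions_symdiff_right:
  "inversions C (symdiff A B) = sym_diff (inversions C A) (inversions C B)"
  by (auto simp: inversions_def symdiff_def)

lemma msign_eq_prod: "msign \<sigma> A B = (\<Prod>_\<in>inversions A B. - 1) * (\<Prod>i\<in>A \<inter> B. \<sigma> i)"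
  by (simp add: msign_def inversions_def)

lemma msign_symdiff_left:
  assumes "finite A" "finite B" "finite C" and "\<forall>i\<in>C. \<sigma> i * \<sigma> i = 1"
  shows "msign \<sigma> (symdiff A B) C = msign \<sigma> A C * msign \<sigma> B C"
proof -
  have "(\<Prod>_\<in>inversions (symdiff A B) C. - 1 :: real)
      = (\<Prod>_\<in>inversions A C. - 1) * (\<Prod>_\<in>inversions B C. - 1)"
    unfolding inversions_symdiff_left using assms(1-3)
    by (intro prod_symmetric_difference) (auto simp: finite_inversions)
  moreover have "(\<Prod>i\<in>symdiff A B \<inter> C. \<sigma> i) = (\<Prod>i\<in>A \<inter> C. \<sigma> i) * (\<Prod>i\<in>B \<inter> C. \<sigma> i)"
  proof -
    have "symdiff A B \<inter> C = sym_diff (A \<inter> C) (B \<inter> C)"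
      by (auto simp: symdiff_def)
    then show ?thesis
      using assms by (auto intro: prod_symmetric_difference)
  qed
  ultimately show ?thesis
    by (simp add: msign_eq_prod mult_ac)
qed

lemma msign_symdiff_right:
  assumes "finite A" "finite B" "finite C" and "\<forall>i\<in>C. \<sigma> i * \<sigma> i = 1"
  shows "msign \<sigma> C (symdiff A B) = msign \<sigma> C A * msign \<sigma> C B"
proof -
  have "(\<Prod>_\<in>inversions C (symdiff A B). - 1 :: real)
      = (\<Prod>_\<in>inversions C A. - 1) * (\<Prod>_\<in>inversions C B. - 1)"
    unfolding inversions_symdiff_right using assms(1-3)
    by (intro prod_symmetric_difference) (auto simp: finite_inversions)
  moreover have "(\<Prod>i\<in>C \<inter> symdiff A B. \<sigma> i) = (\<Prod>i\<in>C \<inter> A. \<sigma> i) * (\<Prod>i\<in>C \<inter> B. \<sigma> i)"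
  proof -
    have "C \<inter> symdiff A B = sym_diff (C \<inter> A) (C \<inter> B)"
      by (auto simp: symdiff_def)
    then show ?thesis
      using assms by (auto intro: prod_symmetric_difference)
  qed
  ultimately show ?thesis
    by (simp add: msign_eq_prod mult_ac)
qed

lemma msign_square:
  assumes "\<forall>i\<in>A \<inter> B. \<sigma> i * \<sigma> i = 1"
  shows "msign \<sigma> A B * msign \<sigma> A B = 1"
proof -
  have "(\<Prod>i\<in>A \<inter> B. \<sigma> i) * (\<Prod>i\<in>A \<inter> B. \<sigma> i) = (\<Prod>i\<in>A \<inter> B. \<sigma> i * \<sigma> i)"
    by (simp add: prod.distrib)
  also have "\<dots> = 1"
    using assms by (intro prod.neutral) auto
  finally have "(\<Prod>i\<in>A \<inter> B. \<sigma> i) * (\<Prod>i\<in>A \<inter> B. \<sigma> i) = 1" .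
  moreover have "(- 1 :: real) ^ k * (- 1) ^ k = 1" for k
    by (simp flip: power_add)
  ultimately show ?thesis
    unfolding msign_def by (simp add: algebra_simps)
qed

lemma msign_symdiff_symdiff:
  assumes "finite M" "finite N" "finite K" and "\<forall>i\<in>M \<union> N \<union> K. \<sigma> i * \<sigma> i = 1"
  shows "msign \<sigma> (symdiff M N) (symdiff N K) * msign \<sigma> M K
    = msign \<sigma> M N * sigmaB \<sigma> N * msign \<sigma> N K"
proof -
  have NK: "finite (symdiff N K)" "\<forall>i\<in>symdiff N K. \<sigma> i * \<sigma> i = 1"
    using assms by (auto simp: symdiff_def)
  have "msign \<sigma> (symdiff M N) (symdiff N K)
      = msign \<sigma> M (symdiff N K) * msign \<sigma> N (symdiff N K)"
    using assms(1,2) NK by (rule msign_symdiff_left)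
  also have "\<dots> = (msign \<sigma> M N * msign \<sigma> M K) * (msign \<sigma> N N * msign \<sigma> N K)"
    using assms by (simp add: msign_symdiff_right)
  finally have "msign \<sigma> (symdiff M N) (symdiff N K)
      = msign \<sigma> M N * msign \<sigma> M K * (sigmaB \<sigma> N * msign \<sigma> N K)"
    by (simp add: sigmaB_def)
  moreover have "msign \<sigma> M K * msign \<sigma> M K = 1"
    using assms(4) by (intro msign_square) blast
  ultimately show ?thesis
    by (simp add: algebra_simps)
qed

definition Emat_coeff :: "(nat \<Rightarrow> real) \<Rightarrow> nat set \<Rightarrow> nat set \<Rightarrow> nat set \<Rightarrow> real" where
  "Emat_coeff \<sigma> S M N = (if symdiff M N = S then sigmaB \<sigma> M * msign \<sigma> M N else 0)"

lemma sum_Emat_coeff_mult: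
  assumes "finite I" "M \<subseteq> I" "K \<subseteq> I" "S \<subseteq> I" and "\<forall>i\<in>I. \<sigma> i * \<sigma> i = 1"
  shows "(\<Sum>N\<in>Pow I. Emat_coeff \<sigma> S M N * Emat_coeff \<sigma> T N K)
    = msign \<sigma> S T * Emat_coeff \<sigma> (symdiff S T) M K"
proof -
  define N where "N = symdiff M S"
  have N: "N \<in> Pow I"
    using assms(2,4) by (auto simp: N_def symdiff_def)
  have S: "symdiff M N = S"
    by (simp add: N_def symdiff_cancel_left)
  have "(\<Sum>N'\<in>Pow I. Emat_coeff \<sigma> S M N' * Emat_coeff \<sigma> T N' K)
      = (\<Sum>N'\<in>Pow I. if N' = N then Emat_coeff \<sigma> S M N * Emat_coeff \<sigma> T N K else 0)"
    by (intro sum.cong) (auto simp: Emat_coeff_def N_def symdiff_eq_iff)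
  also have "\<dots> = Emat_coeff \<sigma> S M N * Emat_coeff \<sigma> T N K"
    using N assms(1) by simp
  also have "\<dots> = msign \<sigma> S T * Emat_coeff \<sigma> (symdiff S T) M K"
  proof (cases "symdiff N K = T")
    case True
    have MK: "symdiff M K = symdiff S T"
      using S True by (metis symdiff_assoc symdiff_cancel_left)
    have "Emat_coeff \<sigma> S M N * Emat_coeff \<sigma> T N K
        = sigmaB \<sigma> M * (msign \<sigma> M N * sigmaB \<sigma> N * msign \<sigma> N K)"
      using S True by (simp add: Emat_coeff_def mult_ac)
    also have "\<dots> = sigmaB \<sigma> M * (msign \<sigma> S T * msign \<sigma> M K)"
    proof -
      have "finite M" "finite N" "finite K"
        using assms(1-3) N by (auto intro: finite_subset)
      moreover have "\<forall>i\<in>M \<union> N \<union> K. \<sigma> i * \<sigma> i = 1"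
        using assms(2,3,5) N by blast
      ultimately show ?thesis
        using msign_symdiff_symdiff[of M N K \<sigma>] S True by simp
    qed
    also have "\<dots> = msign \<sigma> S T * Emat_coeff \<sigma> (symdiff S T) M K"
      using MK by (simp add: Emat_coeff_def mult_ac)
    finally show ?thesis .
  next
    case False
    then have "symdiff M K \<noteq> symdiff S T"
      using S by (metis symdiff_assoc symdiff_cancel_left)
    then show ?thesis
      using False by (simp add: Emat_coeff_def)
  qed
  finally show ?thesis .
qed

lemma Emat_carrier: "Emat n \<sigma> bl S \<in> carrier_mat (2^n) (2^n)"
  unfolding Emat_def Gmat_def Amat_def by auto

lemma index_Emat:
  assumes "i < 2^n" "j < 2^n"
  shows "Emat n \<sigma> bl S $$ (i, j) = Emat_coeff \<sigma> S (bl i) (bl j)"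
proof -
  have "Emat n \<sigma> bl S $$ (i, j) = (\<Sum>k\<in>{0..<2^n}. (if i = k then sigmaB \<sigma> (bl i) else 0) *
      (if symdiff (bl k) (bl j) = S then msign \<sigma> (bl k) (bl j) else 0))"
    using assms by (simp add: Emat_def Gmat_def Amat_def scalar_prod_def)
  also have "\<dots> = (\<Sum>k\<in>{0..<2^n}. if i = k then Emat_coeff \<sigma> S (bl i) (bl j) else 0)"
    by (intro sum.cong) (auto simp: Emat_coeff_def)
  also have "\<dots> = Emat_coeff \<sigma> S (bl i) (bl j)"
    using assms by simp
  finally show ?thesis .
qed

lemma Emat_mult:
  assumes bl: "bij_betw bl {..<2^n} (Pow {1..n})"
    and "\<forall>i\<in>{1..n}. \<sigma> i * \<sigma> i = 1" and "S \<subseteq> {1..n}"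
  shows "Emat n \<sigma> bl S * Emat n \<sigma> bl T = msign \<sigma> S T \<cdot>\<^sub>m Emat n \<sigma> bl (symdiff S T)"
proof (rule eq_matI)
  note dims = carrier_matD[OF Emat_carrier]
  fix i k
  assume "i < dim_row (msign \<sigma> S T \<cdot>\<^sub>m Emat n \<sigma> bl (symdiff S T))"
    and "k < dim_col (msign \<sigma> S T \<cdot>\<^sub>m Emat n \<sigma> bl (symdiff S T))"
  then have ik: "i < 2^n" "k < 2^n"
    by (simp_all add: dims)
  have "(Emat n \<sigma> bl S * Emat n \<sigma> bl T) $$ (i, k)
      = (\<Sum>j\<in>{..<2^n}. Emat_coeff \<sigma> S (bl i) (bl j) * Emat_coeff \<sigma> T (bl j) (bl k))"
    using ik by (simp add: dims scalar_prod_def index_Emat atLeast0LessThan)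
  also have "\<dots> = (\<Sum>N\<in>Pow {1..n}. Emat_coeff \<sigma> S (bl i) N * Emat_coeff \<sigma> T N (bl k))"
    using sum.reindex_bij_betw[OF bl, of "\<lambda>N. Emat_coeff \<sigma> S (bl i) N * Emat_coeff \<sigma> T N (bl k)"] .
  also have "\<dots> = msign \<sigma> S T * Emat_coeff \<sigma> (symdiff S T) (bl i) (bl k)"
    using assms ik bij_betwE[OF bl] by (intro sum_Emat_coeff_mult) auto
  also have "\<dots> = (msign \<sigma> S T \<cdot>\<^sub>m Emat n \<sigma> bl (symdiff S T)) $$ (i, k)"
    using ik by (simp add: dims index_Emat)
  finally show "(Emat n \<sigma> bl S * Emat n \<sigma> bl T) $$ (i, k)
      = (msign \<sigma> S T \<cdot>\<^sub>m Emat n \<sigma> bl (symdiff S T)) $$ (i, k)" .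
qed (simp_all add: carrier_matD[OF Emat_carrier])

lemma clprod_blade:
  assumes "M \<subseteq> {1..n}" "N \<subseteq> {1..n}"
  shows "clprod n \<sigma> (blade M) (blade N) = (\<lambda>U. msign \<sigma> M N * blade (symdiff M N) U)"
proof
  fix U
  define g where "g M' N' = (if symdiff M' N' = U then msign \<sigma> M' N' else 0)" for M' N'
  have "clprod n \<sigma> (blade M) (blade N) U
      = (\<Sum>M'\<in>Pow {1..n}. \<Sum>N'\<in>Pow {1..n}. if N' = N then if M' = M then g M' N' else 0 else 0)"
    unfolding clprod_def blade_def g_def by (intro sum.cong) auto
  also have "\<dots> = (\<Sum>M'\<in>Pow {1..n}. if M' = M then g M' N else 0)"
    using assms(2) by (intro sum.cong) auto
  also have "\<dots> = msign \<sigma> M N * blade (symdiff M N) U"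
    using assms(1) by (simp add: g_def blade_def)
  finally show "clprod n \<sigma> (blade M) (blade N) U = msign \<sigma> M N * blade (symdiff M N) U" .
qed

lemma cpi_smult_blade:
  assumes "R \<subseteq> {1..n}"
  shows "cpi n \<sigma> bl (\<lambda>U. c * blade R U) = c \<cdot>\<^sub>m Emat n \<sigma> bl R"
proof (rule eq_matI)
  note dims = carrier_matD[OF Emat_carrier]
  fix i j
  assume "i < dim_row (c \<cdot>\<^sub>m Emat n \<sigma> bl R)" and "j < dim_col (c \<cdot>\<^sub>m Emat n \<sigma> bl R)"
  then have ij: "i < 2^n" "j < 2^n"
    by (simp_all add: dims)
  have "cpi n \<sigma> bl (\<lambda>U. c * blade R U) $$ (i, j)
      = (\<Sum>S\<in>Pow {1..n}. c * blade R S * Emat n \<sigma> bl S $$ (i, j))"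
    using ij by (simp add: cpi_def)
  also have "\<dots> = (\<Sum>S\<in>Pow {1..n}. if S = R then c * Emat n \<sigma> bl S $$ (i, j) else 0)"
    by (intro sum.cong) (simp_all add: blade_def)
  also have "\<dots> = (c \<cdot>\<^sub>m Emat n \<sigma> bl R) $$ (i, j)"
    using assms ij by (simp add: dims)
  finally show "cpi n \<sigma> bl (\<lambda>U. c * blade R U) $$ (i, j) = (c \<cdot>\<^sub>m Emat n \<sigma> bl R) $$ (i, j)" .
qed (simp_all add: cpi_def carrier_matD[OF Emat_carrier])

lemma smult_smult_mat: "a \<cdot>\<^sub>m (b \<cdot>\<^sub>m A) = (a * b :: 'a :: semigroup_mult) \<cdot>\<^sub>m A"
  by (rule eq_matI) (simp_all add: mult.assoc)

definition signed_blade_matrices :: "nat \<Rightarrow> (nat \<Rightarrow> real) \<Rightarrow> (nat \<Rightarrow> nat set) \<Rightarrow> real mat set" where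
  "signed_blade_matrices n \<sigma> bl = {c \<cdot>\<^sub>m Emat n \<sigma> bl S | c S. (c = 1 \<or> c = -1) \<and> S \<subseteq> {1..n}}"

lemma signed_blade_matrices_mult_closed:
  assumes "bij_betw bl {..<2^n} (Pow {1..n})" and "\<forall>i\<in>{1..n}. \<sigma> i * \<sigma> i = 1"
    and "A \<in> signed_blade_matrices n \<sigma> bl" "B \<in> signed_blade_matrices n \<sigma> bl"
  shows "A * B \<in> signed_blade_matrices n \<sigma> bl"
proof -
  obtain c S where A: "A = c \<cdot>\<^sub>m Emat n \<sigma> bl S" "c = 1 \<or> c = -1" "S \<subseteq> {1..n}"
    using assms(3) unfolding signed_blade_matrices_def by blast
  obtain d T where B: "B = d \<cdot>\<^sub>m Emat n \<sigma> bl T" "d = 1 \<or> d = -1" "T \<subseteq> {1..n}"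
    using assms(4) unfolding signed_blade_matrices_def by blast
  have "A * B = (c * d) \<cdot>\<^sub>m (Emat n \<sigma> bl S * Emat n \<sigma> bl T)"
    by (simp add: A(1) B(1) smult_smult_mat mult_smult_distrib[OF Emat_carrier Emat_carrier]
        mult_smult_assoc_mat[OF Emat_carrier smult_carrier_mat[OF Emat_carrier]])
  also have "\<dots> = (c * d * msign \<sigma> S T) \<cdot>\<^sub>m Emat n \<sigma> bl (symdiff S T)"
    by (simp add: Emat_mult[OF assms(1,2) A(3)] smult_smult_mat)
  finally have AB: "A * B = (c * d * msign \<sigma> S T) \<cdot>\<^sub>m Emat n \<sigma> bl (symdiff S T)" .
  have "msign \<sigma> S T * msign \<sigma> S T = 1"
    using assms(2) A(3) by (intro msign_square) blast
  then have "c * d * msign \<sigma> S T = 1 \<or> c * d * msign \<sigma> S T = -1"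
    using A(2) B(2) by (auto simp: square_eq_1_iff)
  then show ?thesis
    unfolding signed_blade_matrices_def using AB symdiff_subset[OF A(3) B(3)] by blast
qed

theorem theorem1:
  fixes p q n :: nat and \<sigma> :: "nat \<Rightarrow> real" and bl :: "nat \<Rightarrow> nat set" and s t :: nat
  assumes "n = p + q"
    and "\<forall>i\<in>{1..n}. \<sigma> i = 1 \<or> \<sigma> i = -1"
    and "card {i\<in>{1..n}. \<sigma> i = 1} = p"
    and "bij_betw bl {..<2^n} (Pow {1..n})"
    and "bl 0 = {}"
    and "\<forall>i\<in>{1..n}. \<forall>j\<in>{1..n}. \<forall>a<2^n. \<forall>b<2^n.
           i < j \<longrightarrow> bl a = {i} \<longrightarrow> bl b = {j} \<longrightarrow> a < b"
    and "s \<in> {1..n}" and "t \<in> {1..n}"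
  shows "(cpi n \<sigma> bl (clprod n \<sigma> (blade {s}) (blade {t}))
           = Emat n \<sigma> bl {s} * Emat n \<sigma> bl {t})
    \<and> (\<forall>A\<in>{c \<cdot>\<^sub>m Emat n \<sigma> bl S | c S. (c = 1 \<or> c = -1) \<and> S \<subseteq> {1..n}}.
         \<forall>B\<in>{c \<cdot>\<^sub>m Emat n \<sigma> bl S | c S. (c = 1 \<or> c = -1) \<and> S \<subseteq> {1..n}}.
           A * B \<in> {c \<cdot>\<^sub>m Emat n \<sigma> bl S | c S. (c = 1 \<or> c = -1) \<and> S \<subseteq> {1..n}})"
proof
  have sq: "\<forall>i\<in>{1..n}. \<sigma> i * \<sigma> i = 1"
    using assms(2) by (simp add: square_eq_1_iff)
  have st: "{s} \<subseteq> {1..n}" "{t} \<subseteq> {1..n}"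
    using assms(7,8) by auto
  show "cpi n \<sigma> bl (clprod n \<sigma> (blade {s}) (blade {t})) = Emat n \<sigma> bl {s} * Emat n \<sigma> bl {t}"
    unfolding clprod_blade[OF st] cpi_smult_blade[OF symdiff_subset[OF st]]
    by (rule Emat_mult[OF assms(4) sq st(1), symmetric])
  show "\<forall>A\<in>{c \<cdot>\<^sub>m Emat n \<sigma> bl S | c S. (c = 1 \<or> c = -1) \<and> S \<subseteq> {1..n}}.
         \<forall>B\<in>{c \<cdot>\<^sub>m Emat n \<sigma> bl S | c S. (c = 1 \<or> c = -1) \<and> S \<subseteq> {1..n}}.
           A * B \<in> {c \<cdot>\<^sub>m Emat n \<sigma> bl S | c S. (c = 1 \<or> c = -1) \<and> S \<subseteq> {1..n}}"
    using signed_blade_matrices_mult_closed[OF assms(4) sq]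
    unfolding signed_blade_matrices_def by blast
qed

end
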